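(* Let $a,n,r\in\mathbb{N}$ (so $r\ge 1$), $k_1,\ldots,k_n\in\mathbb{N}$, and let $f_1,\ldots,f_n,g_1,\ldots,g_n$ be arbitrary arithmetic functions. Then $$\sum_{j=1}^{K^a} j^r\prod_{i=1}^n s^{(a)}_{f_i,g_i,\mathbf 1}(k_i,j)=\frac{K^{ar}}{2}\prod_{i=1}^n (f_i*g_i)(k_i)+\frac{K^{a(r+1)}}{r+1}\sum_{m=0}^{\lfloor r/2\rfloor}\binom{r+1}{2m}\frac{B_{2m}}{K^{2am}}\sum_{d_1|k_1,\ldots,d_n|k_n}\bigl(\operatorname{lcm}(d_1,\ldots,d_n)\bigr)^{a(2m-1)}\prod_{i=1}^n f_i(d_i)\,g_i\Bigl(\frac{k_i}{d_i}\Bigr).$$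
   Context: An arithmetic function is a map $\mathbb{N}\to\mathbb{C}$; $\mathbf 1$ denotes the constant function $\mathbf 1(n)=1$, and $(f*g)(n)=\sum_{d|n}f(d)g(n/d)$ is the Dirichlet convolution. For $a\in\mathbb{N}$, $s^{(a)}_{f,g,\mathbf 1}(k,j)=\sum_{d|k,\ d^a|j} f(d)\,g(k/d)$ for $k,j\in\mathbb{N}$. $K=\operatorname{lcm}(k_1,\ldots,k_n)$. The Bernoulli numbers $B_m$ are defined by $\frac{t}{e^t-1}=\sum_{m\ge0}B_m\frac{t^m}{m!}$. *)

theory Defs
  imports "HOL-Analysis.Analysis" "HOL-Computational_Algebra.Formal_Power_Series"
begin

definition bernoulli_num :: "nat \<Rightarrow> real" where
  "bernoulli_num m = fact m * fps_nth (fps_X / (fps_exp 1 - 1)) m"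

definition dirichlet_conv :: "(nat \<Rightarrow> complex) \<Rightarrow> (nat \<Rightarrow> complex) \<Rightarrow> nat \<Rightarrow> complex" where
  "dirichlet_conv f g n = (\<Sum>d | d dvd n. f d * g (n div d))"

definition s_fun :: "nat \<Rightarrow> (nat \<Rightarrow> complex) \<Rightarrow> (nat \<Rightarrow> complex) \<Rightarrow> nat \<Rightarrow> nat \<Rightarrow> complex" where
  "s_fun a f g k j = (\<Sum>d | d dvd k \<and> d ^ a dvd j. f d * g (k div d))"

end

theory Submission
  imports Defs
begin

text \<open>Multiplying out the product of the sums \<open>s(k\<^sub>i, j)\<close> gives a sum over divisor tuples
  \<open>d\<^sub>i | k\<^sub>i\<close>, in which a tuple contributes \<open>\<Prod> f\<^sub>i(d\<^sub>i) g\<^sub>i(k\<^sub>i/d\<^sub>i)\<close> exactly when all \<open>d\<^sub>i\<^sup>a\<close>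
  divide \<open>j\<close>, i.e. when \<open>L\<^sup>a | j\<close> for \<open>L = lcm(d)\<close>. Swapping the sums, each tuple is weighted by
  the power sum over the multiples of \<open>L\<^sup>a\<close> up to \<open>K\<^sup>a\<close>, which is \<open>L\<^sup>a\<^sup>r (1\<^sup>r + \<dots> + q\<^sup>r)\<close>
  with \<open>q = (K/L)\<^sup>a\<close>. Faulhaber's formula, obtained by comparing coefficients in
  \<open>t \<Sum>\<^sub>s\<^sub><\<^sub>q e\<^sup>s\<^sup>t = t/(e\<^sup>t - 1) \<cdot> (e\<^sup>q\<^sup>t - 1)\<close>, evaluates it. Only even Bernoulli numbers
  and \<open>B\<^sub>1 = -1/2\<close> survive, and the \<open>B\<^sub>1\<close>-term equals \<open>K\<^sup>a\<^sup>r/2\<close> for every tuple; summed over the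
  tuples it gives \<open>K\<^sup>a\<^sup>r/2 \<Prod> (f\<^sub>i * g\<^sub>i)(k\<^sub>i)\<close>.\<close>

abbreviation bernoulli_fps :: "real fps" where
  "bernoulli_fps \<equiv> fps_X / (fps_exp 1 - 1)"

lemma fps_exp_1_minus_1_nonzero: "fps_exp (1::real) - 1 \<noteq> 0"
  by (metis fps_exp_eq_fps_const_iff fps_const_1_eq_1 right_minus_eq zero_neq_one)

lemma bernoulli_fps_mult_exp_minus_1: "bernoulli_fps * (fps_exp 1 - 1) = fps_X"
proof -
  have "subdegree (fps_exp (1::real) - 1) = 1"
    by (rule subdegreeI) auto
  then have "(fps_exp (1::real) - 1) dvd fps_X"
    using fps_exp_1_minus_1_nonzero by (simp add: fps_dvd_iff)
  then show ?thesis by simp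
qed

text \<open>The reflection rests on \<open>e\<^sup>-\<^sup>t - 1 = -e\<^sup>-\<^sup>t (e\<^sup>t - 1)\<close>.\<close>

lemma bernoulli_fps_reflect: "bernoulli_fps oo (-fps_X) = fps_X + bernoulli_fps"
proof -
  let ?E = "fps_exp (1::real)"
  let ?C = "bernoulli_fps oo (-fps_X)"
  have "(bernoulli_fps * (?E - 1)) oo (-fps_X) = ?C * ((?E - 1) oo (-fps_X))"
    by (rule fps_compose_mult_distrib) simp
  then have reflected: "?C * (fps_exp (-1) - 1) = - fps_X"
    by (simp add: bernoulli_fps_mult_exp_minus_1 fps_compose_sub_distrib)
  have inverse: "fps_exp (-1) * ?E = 1"
    using fps_exp_add_mult[of "-1::real" 1] by simp
  have "?C * (?E - 1) = - (?C * (fps_exp (-1) - 1) * ?E)"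
  proof -
    have "?C * (fps_exp (-1) - 1) * ?E = ?C * (fps_exp (-1) * ?E) - ?C * ?E"
      by (simp only: left_diff_distrib right_diff_distrib mult.assoc mult_1_left)
    then show ?thesis
      by (simp only: inverse mult_1_right right_diff_distrib minus_diff_eq)
  qed
  also have "\<dots> = fps_X * (?E - 1) + fps_X"
    unfolding reflected by (simp add: algebra_simps)
  also have "\<dots> = (fps_X + bernoulli_fps) * (?E - 1)"
    by (simp add: distrib_right bernoulli_fps_mult_exp_minus_1)
  finally show ?thesis
    using fps_exp_1_minus_1_nonzero by simp
qed

lemma bernoulli_fps_nth_reflect:
  "(-1) ^ n * fps_nth bernoulli_fps n = of_bool (n = 1) + fps_nth bernoulli_fps n"
  using arg_cong[OF bernoulli_fps_reflect, of "\<lambda>F. fps_nth F n"]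
  by (simp add: fps_compose_uminus')

lemma bernoulli_num_1: "bernoulli_num 1 = -1/2"
  using bernoulli_fps_nth_reflect[of 1] by (simp add: bernoulli_num_def)

lemma bernoulli_num_odd_eq_0: "odd n \<Longrightarrow> n \<noteq> 1 \<Longrightarrow> bernoulli_num n = 0"
  using bernoulli_fps_nth_reflect[of n] by (simp add: bernoulli_num_def)

lemma fps_X_mult_sum_fps_exp:
  "fps_X * (\<Sum>s<N. fps_exp (real s)) = bernoulli_fps * (fps_exp (real N) - 1)"
proof -
  have "bernoulli_fps * (fps_exp (real N) - 1) = bernoulli_fps * (fps_exp 1 ^ N - 1)"
    by (simp add: fps_exp_power_mult)
  also have "\<dots> = bernoulli_fps * (fps_exp 1 - 1) * (\<Sum>s<N. fps_exp 1 ^ s)"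
    by (simp add: power_diff_1_eq mult.assoc)
  also have "\<dots> = fps_X * (\<Sum>s<N. fps_exp (real s))"
    by (simp add: bernoulli_fps_mult_exp_minus_1 fps_exp_power_mult)
  finally show ?thesis by simp
qed

lemma sum_lessThan_power_bernoulli:
  "(\<Sum>s<N. real s ^ r) =
     (\<Sum>i\<le>r. real ((r + 1) choose i) * bernoulli_num i * real N ^ (r + 1 - i)) / real (r + 1)"
proof -
  have "fps_nth (fps_X * (\<Sum>s<N. fps_exp (real s))) (Suc r)
      = fps_nth (bernoulli_fps * (fps_exp (real N) - 1)) (Suc r)"
    by (simp only: fps_X_mult_sum_fps_exp)
  then have "(\<Sum>s<N. real s ^ r / fact r)
      = (\<Sum>i=0..Suc r. fps_nth bernoulli_fps i * fps_nth (fps_exp (real N) - 1) (Suc r - i))"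
    unfolding fps_X_mult_nth by (simp add: fps_mult_nth fps_sum_nth del: fps_X_mult_nth)
  also have "\<dots> = (\<Sum>i\<le>r. fps_nth bernoulli_fps i * (real N ^ (Suc r - i) / fact (Suc r - i)))"
    by (simp add: atLeast0AtMost sum.atMost_Suc)
  finally have "(\<Sum>s<N. real s ^ r) / fact r
      = (\<Sum>i\<le>r. fps_nth bernoulli_fps i * (real N ^ (Suc r - i) / fact (Suc r - i)))"
    by (simp add: sum_divide_distrib)
  then have coeff: "(\<Sum>s<N. real s ^ r)
      = fact r * (\<Sum>i\<le>r. fps_nth bernoulli_fps i * (real N ^ (Suc r - i) / fact (Suc r - i)))"
    by (simp add: field_simps)
  have "real ((r + 1) choose i) * bernoulli_num i * real N ^ (r + 1 - i) / real (r + 1)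
      = fact r * (fps_nth bernoulli_fps i * (real N ^ (Suc r - i) / fact (Suc r - i)))"
    if "i \<le> r" for i
  proof -
    have "i \<le> Suc r"
      using that by simp
    then have binomial: "real ((r + 1) choose i) * fact i * fact (Suc r - i) = fact r * real (r + 1)"
      by (metis binomial_fact_lemma Suc_eq_plus1 fact_Suc mult.commute mult.left_commute
          of_nat_fact of_nat_mult)
    have "real ((r + 1) choose i) * bernoulli_num i * real N ^ (r + 1 - i) / real (r + 1)
      = real ((r + 1) choose i) * fact i * fact (Suc r - i)
          * (fps_nth bernoulli_fps i * real N ^ (Suc r - i)) / (fact (Suc r - i) * real (r + 1))"
      by (simp add: bernoulli_num_def)
    then show ?thesis
      unfolding binomial by simp
  qed
  then show ?thesis
    unfolding coeff sum_divide_distrib sum_distrib_left by (intro sum.cong) auto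
qed

lemma sum_power_bernoulli_real:
  assumes "r \<ge> 1"
  shows "(\<Sum>s=1..N. real s ^ r) = real N ^ r / 2 +
    (\<Sum>m=0..r div 2. real ((r + 1) choose (2 * m)) * bernoulli_num (2 * m) * real N ^ (r + 1 - 2 * m))
      / real (r + 1)"
proof -
  define h where "h i = real ((r + 1) choose i) * bernoulli_num i * real N ^ (r + 1 - i)" for i
  have shift: "(\<Sum>s=1..N. real s ^ r) = (\<Sum>s<N. real s ^ r) + real N ^ r"
  proof -
    have "(\<Sum>s<Suc N. real s ^ r) = (\<Sum>s\<in>{0..N}. real s ^ r)"
      by (simp add: atLeast0AtMost lessThan_Suc_atMost)
    also have "\<dots> = (\<Sum>s=1..N. real s ^ r)"
      using assms by (simp add: sum.atLeast_Suc_atMost)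
    finally show ?thesis by simp
  qed
  have "(\<Sum>i\<le>r. h i) = (\<Sum>i\<le>r. if even i then h i else 0) + (\<Sum>i\<le>r. if odd i then h i else 0)"
    by (subst sum.distrib[symmetric]) (rule sum.cong, auto)
  also have "(\<Sum>i\<le>r. if odd i then h i else 0) = (\<Sum>i\<le>r. if i = 1 then h 1 else 0)"
    by (rule sum.cong) (auto simp: h_def bernoulli_num_odd_eq_0)
  also have "\<dots> = - (real (r + 1) * real N ^ r / 2)"
    using assms bernoulli_num_1 by (simp add: h_def algebra_simps)
  also have "(\<Sum>i\<le>r. if even i then h i else 0) = (\<Sum>i\<in>{i\<in>{..r}. even i}. h i)"
    by (rule sum.inter_filter[symmetric]) simp
  also have "{i\<in>{..r}. even i} = (\<lambda>m. 2 * m) ` {0..r div 2}"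
    by (auto elim!: evenE)
  also have "(\<Sum>i\<in>(\<lambda>m. 2 * m) ` {0..r div 2}. h i) = (\<Sum>m=0..r div 2. h (2 * m))"
    by (subst sum.reindex) (auto simp: inj_on_def)
  finally have sum_h: "(\<Sum>i\<le>r. h i) = (\<Sum>m=0..r div 2. h (2 * m)) - real (r + 1) * real N ^ r / 2"
    by (simp only: diff_conv_add_uminus minus_divide_left mult_minus_left)
  show ?thesis
    unfolding shift sum_lessThan_power_bernoulli h_def[symmetric] sum_h by (simp add: field_simps)
qed

lemma sum_power_bernoulli:
  assumes "r \<ge> 1"
  shows "(\<Sum>s=1..N. of_nat s ^ r :: 'a :: real_field) = of_nat N ^ r / 2 +
    (\<Sum>m=0..r div 2. of_nat ((r + 1) choose (2 * m)) * of_real (bernoulli_num (2 * m))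
      * of_nat N ^ (r + 1 - 2 * m)) / of_nat (r + 1)"
  using arg_cong[OF sum_power_bernoulli_real[OF assms, of N], of "of_real :: real \<Rightarrow> 'a"]
  by simp

lemma lcm_power_nat: "lcm (x ^ a) (y ^ a) = lcm x y ^ a" for x y :: nat
proof (cases "gcd x y = 0")
  case True
  then show ?thesis by (cases a) auto
next
  case False
  have "lcm (x ^ a) (y ^ a) * gcd x y ^ a = x ^ a * y ^ a"
    by (metis gcd_exp prod_gcd_lcm_nat mult.commute)
  also have "\<dots> = lcm x y ^ a * gcd x y ^ a"
    by (metis prod_gcd_lcm_nat mult.commute power_mult_distrib)
  finally show ?thesis
    using False by auto
qed

lemma Lcm_image_power_nat:
  fixes d :: "'a \<Rightarrow> nat"
  assumes "finite S"
  shows "Lcm ((\<lambda>i. d i ^ a) ` S) = Lcm (d ` S) ^ a"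
  using assms by (induction S rule: finite_induct) (auto simp: lcm_power_nat)

lemma sum_if_dvd_atLeast1_atMost:
  fixes h :: "nat \<Rightarrow> 'a :: comm_monoid_add"
  assumes "M > 0"
  shows "(\<Sum>j=1..M * q. if M dvd j then h j else 0) = (\<Sum>t=1..q. h (M * t))"
proof -
  have "(\<Sum>j=1..M * q. if M dvd j then h j else 0) = (\<Sum>j\<in>{j\<in>{1..M * q}. M dvd j}. h j)"
    by (rule sum.inter_filter[symmetric]) simp
  also have "{j\<in>{1..M * q}. M dvd j} = (\<lambda>t. M * t) ` {1..q}"
    using assms by (auto elim!: dvdE simp: Suc_le_eq)
  also have "(\<Sum>j\<in>(\<lambda>t. M * t) ` {1..q}. h j) = (\<Sum>t=1..q. h (M * t))"
    using assms by (subst sum.reindex) (auto simp: inj_on_def)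
  finally show ?thesis .
qed

lemma power_mult_diff_eq_rescaled:
  fixes x y q :: "'a :: field"
  assumes "x \<noteq> 0" "y \<noteq> 0" "x * q = y" "t \<le> r + 1"
  shows "x ^ r * q ^ (r + 1 - t) = y ^ (r + 1) / y ^ t * (x ^ t / x)"
proof -
  define s where "s = r + 1 - t"
  have r: "r + 1 = s + t"
    using assms(4) by (simp add: s_def)
  have "y ^ (r + 1) / y ^ t = y ^ s"
    using assms(2) unfolding r by (simp add: power_add)
  then have "y ^ (r + 1) / y ^ t * (x ^ t / x) = y ^ s * (x ^ t / x)"
    by simp
  also have "\<dots> = x ^ (s + t) / x * q ^ s"
    by (simp add: assms(3)[symmetric] power_mult_distrib power_add)
  also have "\<dots> = x ^ r * q ^ s"
    using assms(1) by (simp add: r[symmetric])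
  finally show ?thesis
    by (simp add: s_def)
qed

lemma sum_power_multiples_bernoulli:
  fixes L K a r :: nat
  assumes "L dvd K" "K \<noteq> 0" "r \<ge> 1"
  shows "(\<Sum>j=1..K ^ a. if L ^ a dvd j then of_nat j ^ r else 0 :: 'a :: real_field)
    = of_nat K ^ (a * r) / 2 + of_nat K ^ (a * (r + 1)) / of_nat (r + 1) *
      (\<Sum>m=0..r div 2. of_nat ((r + 1) choose (2 * m)) * of_real (bernoulli_num (2 * m))
        / of_nat K ^ (2 * a * m) * of_nat L powi (int a * (2 * int m - 1)))"
proof -
  define B :: "nat \<Rightarrow> 'a" where
    "B m = of_nat ((r + 1) choose (2 * m)) * of_real (bernoulli_num (2 * m))" for m
  define q where "q = (K div L) ^ a"
  define x :: 'a where "x = of_nat L ^ a"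
  define y :: 'a where "y = of_nat K ^ a"
  have "L \<noteq> 0"
    using assms(1,2) by auto
  then have "x \<noteq> 0"
    by (simp add: x_def)
  have "y \<noteq> 0"
    using assms(2) by (simp add: y_def)
  have "L ^ a * q = K ^ a"
    using assms(1) by (simp add: q_def power_mult_distrib[symmetric])
  then have xq: "x * of_nat q = y"
    unfolding x_def y_def by (metis of_nat_mult of_nat_power)
  have powi_L: "(of_nat L :: 'a) powi (int a * (2 * int m - 1)) = x ^ (2 * m) / x" for m
  proof -
    have "(of_nat L :: 'a) powi (int a * (2 * int m - 1)) = x powi (2 * int m - 1)"
      by (simp add: x_def power_int_mult)
    also have "\<dots> = x powi (2 * int m) / x"
      using \<open>x \<noteq> 0\<close> by (simp add: power_int_diff)
    finally show ?thesis
      by (metis of_nat_mult of_nat_numeral power_int_of_nat)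
  qed
  have sum_shape: "(\<Sum>m=0..r div 2. B m * (x ^ r * of_nat q ^ (r + 1 - 2 * m)))
      = (\<Sum>m=0..r div 2. B m * (y ^ (r + 1) / y ^ (2 * m) * (x ^ (2 * m) / x)))"
    by (rule sum.cong[OF refl], subst power_mult_diff_eq_rescaled[OF \<open>x \<noteq> 0\<close> \<open>y \<noteq> 0\<close> xq]) auto
  have "(\<Sum>j=1..K ^ a. if L ^ a dvd j then of_nat j ^ r else 0 :: 'a)
      = (\<Sum>t=1..q. of_nat (L ^ a * t) ^ r)"
    unfolding \<open>L ^ a * q = K ^ a\<close>[symmetric]
    by (rule sum_if_dvd_atLeast1_atMost) (use \<open>L \<noteq> 0\<close> in simp)
  also have "\<dots> = x ^ r * (\<Sum>t=1..q. of_nat t ^ r)"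
    by (simp add: x_def sum_distrib_left power_mult_distrib)
  also have "\<dots> = y ^ r / 2
      + (\<Sum>m=0..r div 2. B m * (x ^ r * of_nat q ^ (r + 1 - 2 * m))) / of_nat (r + 1)"
    unfolding sum_power_bernoulli[OF assms(3)] B_def
    by (simp add: xq[symmetric] power_mult_distrib distrib_left sum_distrib_left mult.left_commute)
  also have "\<dots> = y ^ r / 2
      + (\<Sum>m=0..r div 2. B m * (y ^ (r + 1) / y ^ (2 * m) * (x ^ (2 * m) / x))) / of_nat (r + 1)"
    by (simp only: sum_shape)
  also have "\<dots> = y ^ r / 2 + y ^ (r + 1) / of_nat (r + 1) *
      (\<Sum>m=0..r div 2. B m / y ^ (2 * m) * (x ^ (2 * m) / x))"
    by (simp add: sum_distrib_left sum_divide_distrib mult.commute mult.left_commute)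
  moreover have K_powers: "(of_nat K :: 'a) ^ (a * r) = y ^ r"
    "(of_nat K :: 'a) ^ (a * (r + 1)) = y ^ (r + 1)" "(of_nat K :: 'a) ^ (2 * a * m) = y ^ (2 * m)" for m
    by (simp_all add: y_def power_mult[symmetric] power_add ac_simps)
  ultimately show ?thesis
    by (simp only: B_def K_powers powi_L)
qed

lemma prod_s_fun_eq_sum_PiE:
  assumes "finite I" "\<And>i. i \<in> I \<Longrightarrow> k i \<noteq> 0"
  shows "(\<Prod>i\<in>I. s_fun a (f i) (g i) (k i) j)
    = (\<Sum>d\<in>Pi\<^sub>E I (\<lambda>i. {e. e dvd k i}).
        if Lcm (d ` I) ^ a dvd j then \<Prod>i\<in>I. f i (d i) * g i (k i div d i) else 0)"
proof -
  have "(\<Prod>i\<in>I. s_fun a (f i) (g i) (k i) j)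
      = (\<Sum>d\<in>Pi\<^sub>E I (\<lambda>i. {e. e dvd k i \<and> e ^ a dvd j}). \<Prod>i\<in>I. f i (d i) * g i (k i div d i))"
    unfolding s_fun_def using assms by (intro prod_sum_PiE) (auto simp: finite_divisors_nat)
  also have "Pi\<^sub>E I (\<lambda>i. {e. e dvd k i \<and> e ^ a dvd j})
      = {d \<in> Pi\<^sub>E I (\<lambda>i. {e. e dvd k i}). Lcm (d ` I) ^ a dvd j}"
    using assms(1) by (auto simp: Lcm_image_power_nat[symmetric] Lcm_dvd_iff PiE_iff extensional_def)
  finally show ?thesis
    using assms by (simp add: sum.inter_filter finite_PiE finite_divisors_nat)
qed

lemma prod_dirichlet_conv_eq_sum_PiE:
  assumes "finite I" "\<And>i. i \<in> I \<Longrightarrow> k i \<noteq> 0"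
  shows "(\<Prod>i\<in>I. dirichlet_conv (f i) (g i) (k i))
    = (\<Sum>d\<in>Pi\<^sub>E I (\<lambda>i. {e. e dvd k i}). \<Prod>i\<in>I. f i (d i) * g i (k i div d i))"
  unfolding dirichlet_conv_def using assms by (intro prod_sum_PiE) (auto simp: finite_divisors_nat)

theorem mainTheorem2:
  fixes a n r :: nat and k :: "nat \<Rightarrow> nat" and f g :: "nat \<Rightarrow> nat \<Rightarrow> complex"
  assumes "a \<ge> 1" "n \<ge> 1" "r \<ge> 1" "\<And>i. i \<in> {1..n} \<Longrightarrow> k i \<ge> 1"
  defines "K \<equiv> Lcm (k ` {1..n})"
  shows "(\<Sum>j = 1..K ^ a. of_nat j ^ r * (\<Prod>i = 1..n. s_fun a (f i) (g i) (k i) j))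
    = of_nat K ^ (a * r) / 2 * (\<Prod>i = 1..n. dirichlet_conv (f i) (g i) (k i))
      + of_nat K ^ (a * (r + 1)) / of_nat (r + 1) *
        (\<Sum>m = 0..r div 2. of_nat ((r + 1) choose (2 * m)) * of_real (bernoulli_num (2 * m))
            / of_nat K ^ (2 * a * m) *
          (\<Sum>d \<in> Pi\<^sub>E {1..n} (\<lambda>i. {e. e dvd k i}).
              of_nat (Lcm (d ` {1..n})) powi (int a * (2 * int m - 1)) *
              (\<Prod>i = 1..n. f i (d i) * g i (k i div d i))))"
proof -
  define I where "I = {1..n}"
  define P where "P = Pi\<^sub>E I (\<lambda>i. {e. e dvd k i})"
  define \<Phi> where "\<Phi> d = (\<Prod>i\<in>I. f i (d i) * g i (k i div d i))" for d
  define c :: "nat \<Rightarrow> complex" where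
    "c m = of_nat ((r + 1) choose (2 * m)) * of_real (bernoulli_num (2 * m)) / of_nat K ^ (2 * a * m)" for m
  define p :: "(nat \<Rightarrow> nat) \<Rightarrow> nat \<Rightarrow> complex" where
    "p d m = of_nat (Lcm (d ` I)) powi (int a * (2 * int m - 1))" for d m
  have "finite I"
    by (simp add: I_def)
  have k_nonzero: "k i \<noteq> 0" if "i \<in> I" for i
    using assms(4) that by (fastforce simp: I_def)
  then have "0 \<notin> k ` I"
    by (metis image_iff)
  then have "K \<noteq> 0"
    unfolding K_def I_def[symmetric] using \<open>finite I\<close> by (simp add: Lcm_0_iff)
  have Lcm_dvd_K: "Lcm (d ` I) dvd K" if "d \<in> P" for d
    using that unfolding K_def I_def[symmetric] P_def
    by (auto simp: Lcm_dvd_iff PiE_iff intro: dvd_trans[OF _ dvd_Lcm])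
  have "(\<Sum>j = 1..K ^ a. of_nat j ^ r * (\<Prod>i\<in>I. s_fun a (f i) (g i) (k i) j))
      = (\<Sum>j = 1..K ^ a. of_nat j ^ r * (\<Sum>d\<in>P. if Lcm (d ` I) ^ a dvd j then \<Phi> d else 0))"
    by (simp only: prod_s_fun_eq_sum_PiE[OF \<open>finite I\<close> k_nonzero] P_def \<Phi>_def)
  also have "\<dots> = (\<Sum>d\<in>P. \<Phi> d * (\<Sum>j = 1..K ^ a. if Lcm (d ` I) ^ a dvd j then of_nat j ^ r else 0))"
    unfolding sum_distrib_left by (subst sum.swap) (intro sum.cong refl; simp)
  also have "\<dots> = (\<Sum>d\<in>P. \<Phi> d * (of_nat K ^ (a * r) / 2
      + of_nat K ^ (a * (r + 1)) / of_nat (r + 1) * (\<Sum>m = 0..r div 2. c m * p d m)))"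
    by (rule sum.cong[OF refl])
      (simp only: sum_power_multiples_bernoulli[OF Lcm_dvd_K \<open>K \<noteq> 0\<close> assms(3)] c_def p_def)
  also have "\<dots> = of_nat K ^ (a * r) / 2 * (\<Sum>d\<in>P. \<Phi> d)
      + of_nat K ^ (a * (r + 1)) / of_nat (r + 1) * (\<Sum>m = 0..r div 2. c m * (\<Sum>d\<in>P. p d m * \<Phi> d))"
    by (simp add: algebra_simps sum.distrib sum_distrib_left sum_distrib_right sum.swap[of _ P])
  finally show ?thesis
    using prod_dirichlet_conv_eq_sum_PiE[OF \<open>finite I\<close> k_nonzero]
    by (simp add: I_def P_def \<Phi>_def c_def p_def)
qed

end
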